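(* Let $X=(X_1,\dots,X_d)$ be a random vector of asset returns with finite, strictly positive variances and correlation matrix $\boldsymbol{\rho}=(\rho_{ij})$. Let $G^{\star}=\{G_1,\dots,G_K\}$ be the partition of $[d]$ into the equivalence classes of the relation $i\sim j \iff \max_{l\neq i,j}|\rho_{il}-\rho_{jl}|=0$. For a selection $J=(J(1),\dots,J(K))$ with $J(k)\in G_k$ for each $k$, let $\boldsymbol{\Sigma}_{J}$ be the $K\times K$ covariance matrix of $(X_{J(1)},\dots,X_{J(K)})$ and define the minimum (no-short-selling) portfolio variance $$\mathrm{Var}_{\min}(P_J):=\min\{\mathbf{w}^{\top}\boldsymbol{\Sigma}_J\mathbf{w}:\ \mathbf{w}\in\mathbb{R}^K,\ \mathbf{w}^{\top}\mathbf{1}=1,\ \mathbf{w}\ge 0\}.$$ Let $J^{*}$ be any selection with $J^{*}(k)\in\operatorname{argmin}_{j\in G_k}\mathrm{Var}(X_j)$ for every $k\in[K]$. Then $\mathrm{Var}_{\min}(P_{J^{*}})\le \mathrm{Var}_{\min}(P_J)$ for every selection $J$, i.e. $J^*$ minimizes $\mathrm{Var}_{\min}(P_J)$ over all selections.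
   Context: $[d]=\{1,\dots,d\}$; $\mathbf{1}$ is the all-ones vector and $\mathbf{w}\ge0$ is componentwise. *)

theory Defs
  imports "HOL-Probability.Probability"
begin

definition covar :: "'a measure \<Rightarrow> ('a \<Rightarrow> real) \<Rightarrow> ('a \<Rightarrow> real) \<Rightarrow> real" where
  "covar M Y Z = (LINT \<omega>|M. (Y \<omega> - (LINT \<omega>'|M. Y \<omega>')) * (Z \<omega> - (LINT \<omega>'|M. Z \<omega>')))"

definition corr :: "'a measure \<Rightarrow> ('i \<Rightarrow> 'a \<Rightarrow> real) \<Rightarrow> 'i \<Rightarrow> 'i \<Rightarrow> real" where
  "corr M X i j = covar M (X i) (X j) / sqrt (covar M (X i) (X i) * covar M (X j) (X j))"

text \<open>i ~ j iff max over l different from i,j of |rho_il - rho_jl| is 0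
  (maximum over the empty set read as 0).\<close>
definition corr_equiv :: "'a measure \<Rightarrow> ('i \<Rightarrow> 'a \<Rightarrow> real) \<Rightarrow> 'i \<Rightarrow> 'i \<Rightarrow> bool" where
  "corr_equiv M X i j \<longleftrightarrow> (\<forall>l. l \<noteq> i \<and> l \<noteq> j \<longrightarrow> \<bar>corr M X i l - corr M X j l\<bar> = 0)"

definition classes :: "'a measure \<Rightarrow> ('i \<Rightarrow> 'a \<Rightarrow> real) \<Rightarrow> 'i set set" where
  "classes M X = UNIV // {(i, j). corr_equiv M X i j}"

definition is_selection :: "'a measure \<Rightarrow> ('i \<Rightarrow> 'a \<Rightarrow> real) \<Rightarrow> ('i set \<Rightarrow> 'i) \<Rightarrow> bool" where
  "is_selection M X J \<longleftrightarrow> (\<forall>G \<in> classes M X. J G \<in> G)"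

definition port_var :: "'a measure \<Rightarrow> ('i \<Rightarrow> 'a \<Rightarrow> real) \<Rightarrow> ('i set \<Rightarrow> 'i) \<Rightarrow> ('i set \<Rightarrow> real) \<Rightarrow> real" where
  "port_var M X J w = (\<Sum>G\<in>classes M X. \<Sum>H\<in>classes M X. w G * w H * covar M (X (J G)) (X (J H)))"

text \<open>Minimum long-only fully invested portfolio variance (the minimum is attained, so Inf = min).\<close>
definition var_min :: "'a measure \<Rightarrow> ('i \<Rightarrow> 'a \<Rightarrow> real) \<Rightarrow> ('i set \<Rightarrow> 'i) \<Rightarrow> real" where
  "var_min M X J = Inf {port_var M X J w | w. (\<forall>G \<in> classes M X. w G \<ge> 0) \<and> (\<Sum>G\<in>classes M X. w G) = 1}"

end

theory Submission
  imports Defs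
begin

text \<open>Correlations do not depend on which representative of a class is chosen, so passing from a
  selection J to J* only rescales each asset by a ratio of standard deviations. A weight vector
  w for J becomes w(G) \<sigma>(J G) / \<sigma>(J* G) for J*, with the same portfolio variance; its total
  weight T is at least 1 because \<sigma>(J* G) is minimal, and normalising by T divides the variance
  by T squared.\<close>

lemma integrable_centered_mult:
  assumes "prob_space M"
    and "Y \<in> borel_measurable M" "Z \<in> borel_measurable M"
    and "integrable M (\<lambda>\<omega>. (Y \<omega>)\<^sup>2)" "integrable M (\<lambda>\<omega>. (Z \<omega>)\<^sup>2)"
  shows "integrable M (\<lambda>\<omega>. (Y \<omega> - c) * (Z \<omega> - (d::real)))"
proof -
  interpret prob_space M by fact
  have "integrable M Y" "integrable M Z"
    using assms square_integrable_imp_integrable by blast+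
  moreover have "integrable M (\<lambda>\<omega>. Y \<omega> * Z \<omega>)"
  proof (rule Bochner_Integration.integrable_bound)
    show "integrable M (\<lambda>\<omega>. (Y \<omega>)\<^sup>2 + (Z \<omega>)\<^sup>2)" using assms by auto
    show "(\<lambda>\<omega>. Y \<omega> * Z \<omega>) \<in> borel_measurable M" using assms by auto
    have "\<bar>y * z\<bar> \<le> y\<^sup>2 + z\<^sup>2" for y z :: real
      using sum_squares_bound[of y z] sum_squares_bound[of "-y" z] by (auto simp: abs_if)
    then show "AE \<omega> in M. norm (Y \<omega> * Z \<omega>) \<le> norm ((Y \<omega>)\<^sup>2 + (Z \<omega>)\<^sup>2)" by simp
  qed
  ultimately show ?thesis by (simp add: algebra_simps)
qed

lemma covar_sym: "covar M Y Z = covar M Z Y"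
  unfolding covar_def by (simp add: mult.commute)

lemma corr_sym: "corr M X i j = corr M X j i"
  unfolding corr_def by (simp add: covar_sym mult.commute)

lemma corr_self: "covar M (X i) (X i) > 0 \<Longrightarrow> corr M X i i = 1"
  unfolding corr_def by simp

lemma covar_eq_corr_mult_sqrt:
  assumes "covar M (X i) (X i) > 0" "covar M (X j) (X j) > 0"
  shows "covar M (X i) (X j) =
    corr M X i j * sqrt (covar M (X i) (X i)) * sqrt (covar M (X j) (X j))"
  using assms unfolding corr_def by (simp add: real_sqrt_mult)

lemma equiv_corr_equiv: "equiv UNIV {(i, j). corr_equiv M X i j}"
proof -
  have trans: "corr_equiv M X i k" if ij: "corr_equiv M X i j" and jk: "corr_equiv M X j k" for i j k
  proof (cases "i = j \<or> j = k \<or> i = k")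
    case True
    then show ?thesis using ij jk unfolding corr_equiv_def by auto
  next
    case distinct: False
    have ij': "corr M X i l = corr M X j l" if "l \<noteq> i" "l \<noteq> j" for l
      using ij that unfolding corr_equiv_def by auto
    have jk': "corr M X j l = corr M X k l" if "l \<noteq> j" "l \<noteq> k" for l
      using jk that unfolding corr_equiv_def by auto
    have "corr M X i l = corr M X k l" if "l \<noteq> i" "l \<noteq> k" for l
    proof (cases "l = j")
      case True
      have "corr M X i j = corr M X k i" using jk'[of i] distinct by (metis corr_sym)
      also have "\<dots> = corr M X k j" using ij'[of k] distinct by (metis corr_sym)
      finally show ?thesis using True by simp
    qed (use ij' jk' that in auto)
    then show ?thesis unfolding corr_equiv_def by auto
  qed
  have sym: "corr_equiv M X j i" if "corr_equiv M X i j" for i j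
    using that unfolding corr_equiv_def by (simp add: corr_sym)
  have "corr_equiv M X i i" for i
    unfolding corr_equiv_def by simp
  with sym trans show ?thesis
    unfolding equiv_def refl_on_def sym_def trans_def by blast
qed

lemma classes_nonempty: "classes M X \<noteq> {}"
  unfolding classes_def by (simp add: quotient_def)

lemma classes_disjoint:
  "G \<in> classes M X \<Longrightarrow> H \<in> classes M X \<Longrightarrow> G \<noteq> H \<Longrightarrow> G \<inter> H = {}"
  unfolding classes_def using quotient_disj[OF equiv_corr_equiv] by blast

lemma corr_eq_within_class:
  assumes "G \<in> classes M X" "i \<in> G" "j \<in> G" "l \<notin> G"
  shows "corr M X i l = corr M X j l"
proof -
  have "(i, j) \<in> {(i, j). corr_equiv M X i j}"
    using quotient_eq_iff[OF equiv_corr_equiv[of M X], of G G i j] assms unfolding classes_def by simp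
  then show ?thesis using assms unfolding corr_equiv_def by auto
qed

lemma corr_selection_eq:
  assumes pos: "\<And>i. covar M (X i) (X i) > 0"
    and "is_selection M X J" "is_selection M X J'"
    and G: "G \<in> classes M X" and H: "H \<in> classes M X"
  shows "corr M X (J' G) (J' H) = corr M X (J G) (J H)"
proof (cases "G = H")
  case True
  then show ?thesis using pos by (simp add: corr_self)
next
  case False
  have "J G \<in> G" "J' G \<in> G" "J H \<in> H" "J' H \<in> H"
    using assms unfolding is_selection_def by auto
  moreover have "G \<inter> H = {}" using classes_disjoint[OF G H False] .
  ultimately have "corr M X (J' G) (J' H) = corr M X (J G) (J' H)"
    and "corr M X (J' H) (J G) = corr M X (J H) (J G)"
    using corr_eq_within_class[OF G, of "J' G" "J G" "J' H"]
      corr_eq_within_class[OF H, of "J' H" "J H" "J G"] by auto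
  then show ?thesis by (simp add: corr_sym)
qed

lemma port_var_nonneg:
  assumes "prob_space M"
    and "\<And>i. X i \<in> borel_measurable M"
    and "\<And>i. integrable M (\<lambda>\<omega>. (X i \<omega>)\<^sup>2)"
  shows "port_var M X J w \<ge> 0"
proof -
  define Y where "Y i \<omega> = X i \<omega> - (LINT \<omega>'|M. X i \<omega>')" for i \<omega>
  define C where "C = classes M X"
  have integrable: "integrable M (\<lambda>\<omega>. Y i \<omega> * Y j \<omega>)" for i j
    unfolding Y_def using assms by (intro integrable_centered_mult) auto
  have "port_var M X J w = (\<Sum>G\<in>C. \<Sum>H\<in>C. LINT \<omega>|M. w G * w H * (Y (J G) \<omega> * Y (J H) \<omega>))"
    unfolding port_var_def C_def covar_def Y_def by simp
  also have "\<dots> = (LINT \<omega>|M. (\<Sum>G\<in>C. w G * Y (J G) \<omega>)\<^sup>2)"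
    using integrable by (simp add: integral_sum power2_eq_square sum_product algebra_simps)
  finally show ?thesis by simp
qed

lemma port_var_scale: "port_var M X J (\<lambda>G. c * w G) = c\<^sup>2 * port_var M X J w"
  unfolding port_var_def by (simp add: sum_distrib_left power2_eq_square mult_ac)

lemma port_var_change_selection:
  assumes pos: "\<And>i. covar M (X i) (X i) > 0"
    and J: "is_selection M X J" and J': "is_selection M X J'"
  defines "\<sigma> i \<equiv> sqrt (covar M (X i) (X i))"
  shows "port_var M X J' (\<lambda>G. w G * \<sigma> (J G) / \<sigma> (J' G)) = port_var M X J w"
  unfolding port_var_def
proof (intro sum.cong refl)
  fix G H assume G: "G \<in> classes M X" and H: "H \<in> classes M X"
  have \<sigma>_pos: "\<sigma> i > 0" for i using pos unfolding \<sigma>_def by simp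
  have covar_J': "covar M (X (J' G)) (X (J' H)) = corr M X (J G) (J H) * \<sigma> (J' G) * \<sigma> (J' H)"
    using covar_eq_corr_mult_sqrt[of M X "J' G" "J' H", OF pos pos] corr_selection_eq[OF pos J J' G H]
    unfolding \<sigma>_def by simp
  have covar_J: "covar M (X (J G)) (X (J H)) = corr M X (J G) (J H) * \<sigma> (J G) * \<sigma> (J H)"
    using covar_eq_corr_mult_sqrt[of M X "J G" "J H", OF pos pos] unfolding \<sigma>_def by simp
  show "w G * \<sigma> (J G) / \<sigma> (J' G) * (w H * \<sigma> (J H) / \<sigma> (J' H)) * covar M (X (J' G)) (X (J' H))
      = w G * w H * covar M (X (J G)) (X (J H))"
    unfolding covar_J covar_J' using \<sigma>_pos[of "J' G"] \<sigma>_pos[of "J' H"] by (simp add: field_simps)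
qed

definition long_only_weights :: "'i set set \<Rightarrow> ('i set \<Rightarrow> real) set" where
  "long_only_weights C = {w. (\<forall>G\<in>C. w G \<ge> 0) \<and> (\<Sum>G\<in>C. w G) = 1}"

lemma var_min_eq_Inf: "var_min M X J = Inf (port_var M X J ` long_only_weights (classes M X))"
  unfolding var_min_def long_only_weights_def by (simp add: image_def, metis)

lemma long_only_weights_nonempty:
  assumes "finite C" "C \<noteq> {}"
  shows "long_only_weights C \<noteq> {}"
proof -
  obtain G0 where "G0 \<in> C" using assms by auto
  then have "(\<lambda>G. if G = G0 then 1 else 0) \<in> long_only_weights C"
    using assms by (simp add: long_only_weights_def)
  then show ?thesis by auto
qed

lemma Inf_image_le_if_dominated:
  fixes f g :: "'b \<Rightarrow> 'c::conditionally_complete_lattice"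
  assumes "A \<noteq> {}" "bdd_below (f ` B)"
    and "\<And>x. x \<in> A \<Longrightarrow> \<exists>y\<in>B. f y \<le> g x"
  shows "Inf (f ` B) \<le> Inf (g ` A)"
proof (rule cInf_greatest)
  show "g ` A \<noteq> {}" using assms by simp
next
  fix z assume "z \<in> g ` A"
  then obtain x where "x \<in> A" "z = g x" by auto
  then obtain y where "y \<in> B" "f y \<le> z" using assms(3) by auto
  then show "Inf (f ` B) \<le> z" using cInf_lower[OF _ assms(2)] by (meson image_eqI order_trans)
qed

lemma exists_long_only_weights_le:
  assumes P: "prob_space M"
    and meas: "\<And>i. X i \<in> borel_measurable M"
    and sq: "\<And>i. integrable M (\<lambda>\<omega>. (X i \<omega>)\<^sup>2)"
    and pos: "\<And>i. covar M (X i) (X i) > 0"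
    and Jstar: "is_selection M X Jstar"
    and min_var: "\<And>G j. G \<in> classes M X \<Longrightarrow> j \<in> G \<Longrightarrow>
            covar M (X (Jstar G)) (X (Jstar G)) \<le> covar M (X j) (X j)"
    and J: "is_selection M X J"
    and w: "w \<in> long_only_weights (classes M X)"
  shows "\<exists>u \<in> long_only_weights (classes M X). port_var M X Jstar u \<le> port_var M X J w"
proof -
  define C where "C = classes M X"
  define \<sigma> where "\<sigma> i = sqrt (covar M (X i) (X i))" for i
  define v where "v G = w G * \<sigma> (J G) / \<sigma> (Jstar G)" for G
  define T where "T = (\<Sum>G\<in>C. v G)"
  have \<sigma>_pos: "\<sigma> i > 0" for i using pos unfolding \<sigma>_def by simp
  have w_nonneg: "w G \<ge> 0" and w_sum: "(\<Sum>G\<in>C. w G) = 1" if "G \<in> C" for G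
    using w that unfolding long_only_weights_def C_def by auto
  have w_le_v: "w G \<le> v G" if G: "G \<in> C" for G
  proof -
    have "\<sigma> (Jstar G) \<le> \<sigma> (J G)"
      using min_var J G unfolding \<sigma>_def C_def is_selection_def by simp
    then have "w G * \<sigma> (Jstar G) \<le> w G * \<sigma> (J G)" using w_nonneg[OF G] by (rule mult_left_mono)
    then show ?thesis unfolding v_def using \<sigma>_pos by (simp add: le_divide_eq)
  qed
  have T: "1 \<le> T"
    using sum_mono[of C w v] w_le_v w_sum classes_nonempty unfolding T_def C_def by fastforce
  define u where "u G = v G / T" for G
  have "u G \<ge> 0" if "G \<in> C" for G
    using w_nonneg[OF that] w_le_v[OF that] T unfolding u_def by simp
  moreover have "(\<Sum>G\<in>C. u G) = 1"
    using T unfolding u_def T_def by (simp add: sum_divide_distrib[symmetric])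
  ultimately have u: "u \<in> long_only_weights C" unfolding long_only_weights_def by simp
  have "port_var M X Jstar v = port_var M X J w"
    using port_var_change_selection[OF pos J Jstar, of w] unfolding v_def[abs_def] \<sigma>_def .
  then have "port_var M X Jstar u = port_var M X J w / T\<^sup>2"
    using port_var_scale[of M X Jstar "1 / T" v] unfolding u_def by (simp add: power_one_over)
  also have "\<dots> \<le> port_var M X J w"
    using port_var_nonneg[of M X J w, OF P meas sq] one_le_power[OF T, of 2]
    by (simp add: divide_le_eq mult_le_cancel_left1 mult.commute)
  finally show ?thesis using u unfolding C_def by blast
qed

theorem theorem2:
  fixes M :: "'a measure" and X :: "'i::finite \<Rightarrow> 'a \<Rightarrow> real"
    and Jstar J :: "'i set \<Rightarrow> 'i"
  assumes "prob_space M"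
    and "\<And>i. X i \<in> borel_measurable M"
    and "\<And>i. integrable M (\<lambda>\<omega>. (X i \<omega>)\<^sup>2)"
    and "\<And>i. covar M (X i) (X i) > 0"
    and "is_selection M X Jstar"
    and "\<And>G j. G \<in> classes M X \<Longrightarrow> j \<in> G \<Longrightarrow>
            covar M (X (Jstar G)) (X (Jstar G)) \<le> covar M (X j) (X j)"
    and "is_selection M X J"
  shows "var_min M X Jstar \<le> var_min M X J"
  unfolding var_min_eq_Inf
proof (rule Inf_image_le_if_dominated)
  show "long_only_weights (classes M X) \<noteq> {}"
    by (rule long_only_weights_nonempty[OF finite classes_nonempty])
  show "bdd_below (port_var M X Jstar ` long_only_weights (classes M X))"
    using port_var_nonneg[of M X Jstar, OF assms(1-3)] by (intro bdd_belowI[where m = 0]) auto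
  show "\<exists>u \<in> long_only_weights (classes M X). port_var M X Jstar u \<le> port_var M X J w"
    if "w \<in> long_only_weights (classes M X)" for w
    using exists_long_only_weights_le[OF assms that] .
qed

end
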